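(* Let $\Omega\subset\mathbb{R}^{n+m}$ be a bounded open set, $p\in(1,\infty)$, and $0<s_0<s<1$. Then for every $u\in\widetilde{\mathcal W}^{s,p}(\Omega)$, \[ \frac{(1-s_0)[u]^p_{\mathcal W^{s_0,p}(\Omega)}}{2^{(1-s_0)p}\operatorname{diam}(\Omega)^{(s-s_0)p}}\le(1-s)[u]^p_{\mathcal W^{s,p}(\mathbb{R}^{n+m})}. \]
   Context: Points of $\mathbb{R}^{n+m}$ are $(x,y)$, $x\in\mathbb{R}^n$, $y\in\mathbb{R}^m$; $\Omega_y=\{x:(x,y)\in\Omega\}$, $\Omega_x=\{y:(x,y)\in\Omega\}$. For $r\in(0,1)$: $[u]^p_{\mathcal W^{r,p}(\Omega)}=\int_\Omega\int_{\Omega_y}\frac{|u(x,y)-u(z,y)|^p}{|x-z|^{n+rp}}dz\,dx\,dy+\int_\Omega\int_{\Omega_x}\frac{|u(x,y)-u(x,w)|^p}{|y-w|^{m+rp}}dw\,dx\,dy$, and $[u]^p_{\mathcal W^{r,p}(\mathbb{R}^{n+m})}$ is the same expression with all integrals over $\mathbb{R}^{n+m}$, $\mathbb{R}^n$, $\mathbb{R}^m$. $\widetilde{\mathcal W}^{s,p}(\Omega)$ is the set of $u\in L^p(\mathbb{R}^{n+m})$ with $[u]_{\mathcal W^{s,p}(\mathbb{R}^{n+m})}<\infty$ and $u\equiv0$ outside $\Omega$. *)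

theory Defs
  imports "HOL-Analysis.Analysis"
begin

text \<open>Points of R^(n+m) are pairs (x,y) with x :: 'a, y :: 'b, where 'a, 'b are
  Euclidean spaces of dimensions n = DIM('a) and m = DIM('b).\<close>

definition slice_y :: "('a \<times> 'b) set \<Rightarrow> 'b \<Rightarrow> 'a set" where
  "slice_y \<Omega> y = {x. (x, y) \<in> \<Omega>}"

definition slice_x :: "('a \<times> 'b) set \<Rightarrow> 'a \<Rightarrow> 'b set" where
  "slice_x \<Omega> x = {y. (x, y) \<in> \<Omega>}"

definition aniso_seminorm ::
  "('a::euclidean_space \<times> 'b::euclidean_space) set \<Rightarrow> real \<Rightarrow> real \<Rightarrow> ('a \<times> 'b \<Rightarrow> real) \<Rightarrow> ennreal" where
  "aniso_seminorm \<Omega> r p u =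
     (\<integral>\<^sup>+ w \<in> \<Omega>. (\<integral>\<^sup>+ z \<in> slice_y \<Omega> (snd w).
        ennreal (\<bar>u (fst w, snd w) - u (z, snd w)\<bar> powr p
                 / norm (fst w - z) powr (real DIM('a) + r * p)) \<partial>lborel) \<partial>lborel)
   + (\<integral>\<^sup>+ w \<in> \<Omega>. (\<integral>\<^sup>+ v \<in> slice_x \<Omega> (fst w).
        ennreal (\<bar>u (fst w, snd w) - u (fst w, v)\<bar> powr p
                 / norm (snd w - v) powr (real DIM('b) + r * p)) \<partial>lborel) \<partial>lborel)"

definition aniso_seminorm_full ::
  "real \<Rightarrow> real \<Rightarrow> ('a::euclidean_space \<times> 'b::euclidean_space \<Rightarrow> real) \<Rightarrow> ennreal" where
  "aniso_seminorm_full r p u = aniso_seminorm UNIV r p u"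

definition tildeW ::
  "real \<Rightarrow> real \<Rightarrow> ('a::euclidean_space \<times> 'b::euclidean_space) set \<Rightarrow> ('a \<times> 'b \<Rightarrow> real) set" where
  "tildeW s p \<Omega> = {u. u \<in> borel_measurable lborel
       \<and> (\<integral>\<^sup>+ w. ennreal (\<bar>u w\<bar> powr p) \<partial>lborel) < \<infinity>
       \<and> aniso_seminorm_full s p u < \<infinity>
       \<and> (\<forall>w. w \<notin> \<Omega> \<longrightarrow> u w = 0)}"

end

theory Submission
  imports Defs
begin

text \<open>
  For a shift \<open>h\<close> in the first factor let \<open>\<omega>(h) = \<integral> \<bar>u(x + h, y) - u(x, y)\<bar>^p d(x, y)\<close>
  (\<open>shift_energy u p h\<close>).
  By Fubini, the first half of \<open>[u]^p_{W^{r,p}}\<close> over the whole space is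
  \<open>\<integral> \<omega>(h) \<bar>h\<bar>^{-n-rp} dh\<close>, and over \<open>\<Omega>\<close> it is at most the same integral restricted to
  \<open>\<bar>h\<bar> \<le> d = diam \<Omega>\<close>. The triangle inequality gives \<open>\<omega>(2h) \<le> 2^p \<omega>(h)\<close>, so by scaling
  \<open>T(R) = \<integral>_{\<bar>h\<bar>\<le>R} \<omega>(h) \<bar>h\<bar>^{-n-sp} dh\<close> satisfies \<open>T(R) \<le> 2^{(1-s)p} T(R/2)\<close>.
  On the dyadic shell \<open>d/2^{k+1} < \<bar>h\<bar> \<le> d/2^k\<close> the \<open>s\<^sub>0\<close>-kernel is at most
  \<open>(d/2^k)^{(s-s\<^sub>0)p}\<close> times the \<open>s\<close>-kernel; summing over the shells by parts against
  the growth bound for \<open>T\<close> and an elementary inequality for the constants yields the estimate.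
  The second half of the seminorm is the first one for the function with swapped variables.
\<close>

lemma nn_integral_lborel_translate:
  fixes c :: "'a::euclidean_space"
  assumes [measurable]: "f \<in> borel_measurable borel"
  shows "(\<integral>\<^sup>+x. f x \<partial>lborel) = (\<integral>\<^sup>+x. f (c + x) \<partial>lborel)"
proof -
  have "(\<integral>\<^sup>+x. f (c + x) \<partial>lborel) = (\<integral>\<^sup>+x. f x \<partial>distr lborel borel ((+) c))"
    by (subst nn_integral_distr) auto
  then show ?thesis by (simp add: lborel_distr_plus)
qed

lemma nn_integral_lborel_scaleR:
  fixes c :: real
  assumes [measurable]: "f \<in> borel_measurable (borel :: 'a::euclidean_space measure)" and "c \<noteq> 0"
  shows "(\<integral>\<^sup>+x. f x \<partial>lborel) = ennreal (\<bar>c\<bar>^DIM('a)) * (\<integral>\<^sup>+x. f (c *\<^sub>R x) \<partial>lborel)"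
  by (subst lborel_affine[OF assms(2), of 0])
     (simp add: nn_integral_density nn_integral_distr nn_integral_cmult)

lemma borel_measurable_lborel_pair:
  assumes "f \<in> borel_measurable (borel :: ('a::euclidean_space \<times> 'b::euclidean_space) measure)"
  shows "f \<in> borel_measurable (lborel \<Otimes>\<^sub>M lborel :: ('a \<times> 'b) measure)"
proof -
  have "sets (lborel \<Otimes>\<^sub>M lborel :: ('a \<times> 'b) measure) = sets (borel \<Otimes>\<^sub>M borel)"
    by (rule sets_pair_measure_cong) (rule sets_lborel)+
  also have "\<dots> = sets borel" by (simp only: borel_prod)
  finally show ?thesis by (subst measurable_cong_sets[OF _ refl]) (use assms in auto)
qed

lemma nn_integral_lborel_swap:
  fixes H :: "'a::euclidean_space \<times> 'b::euclidean_space \<Rightarrow> ennreal"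
  assumes H: "H \<in> borel_measurable borel"
  shows "(\<integral>\<^sup>+ w. H w \<partial>lborel) = (\<integral>\<^sup>+ w. H (snd w, fst w) \<partial>(lborel :: ('b \<times> 'a) measure))"
proof -
  have "(\<integral>\<^sup>+ w. H w \<partial>lborel) = (\<integral>\<^sup>+ w. H w \<partial>(lborel \<Otimes>\<^sub>M lborel))"
    by (simp only: lborel_prod)
  also have "\<dots> = (\<integral>\<^sup>+ w. H w \<partial>(distr (lborel \<Otimes>\<^sub>M lborel) (lborel \<Otimes>\<^sub>M lborel) (\<lambda>(x, y). (y, x))))"
    by (subst lborel_pair.distr_pair_swap) (rule refl)
  also have "\<dots> = (\<integral>\<^sup>+ w. H ((\<lambda>(x, y). (y, x)) w) \<partial>(lborel \<Otimes>\<^sub>M lborel))"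
    by (rule nn_integral_distr) (auto intro: measurable_pair_swap' borel_measurable_lborel_pair H)
  also have "\<dots> = (\<integral>\<^sup>+ w. H (snd w, fst w) \<partial>(lborel :: ('b \<times> 'a) measure))"
    by (simp only: lborel_prod case_prod_beta)
  finally show ?thesis .
qed

lemma powr_add_le_two_powr:
  fixes a b p :: real
  assumes "0 \<le> a" "0 \<le> b" "1 \<le> p"
  shows "(a + b) powr p \<le> 2 powr (p - 1) * (a powr p + b powr p)"
proof (cases "a = 0 \<or> b = 0")
  case True
  have "1 \<le> 2 powr (p - 1)" using assms by (intro ge_one_powr_ge_zero) auto
  then show ?thesis using True assms
    by (auto simp: mult_le_cancel_right1 intro: order_trans[OF _ mult_right_mono[of 1]])
next
  case False
  then have ab: "0 < a" "0 < b" using assms by auto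
  have "((1/2) * a + (1/2) * b) powr p \<le> (1/2) * a powr p + (1/2) * b powr p"
    using convex_onD[OF powr_convex[OF assms(3)], of "1/2" a b] ab by simp
  then have "((a + b) / 2) powr p \<le> (a powr p + b powr p) / 2" by (simp add: field_simps)
  moreover have "((a + b) / 2) powr p = (a + b) powr p / 2 powr p"
    using ab by (simp add: powr_divide)
  moreover have "2 powr p = 2 * 2 powr (p - 1)" by (simp add: powr_diff)
  ultimately show ?thesis by (simp add: field_simps)
qed

definition shift_energy :: "('a::euclidean_space \<times> 'b::euclidean_space \<Rightarrow> real) \<Rightarrow> real \<Rightarrow> 'a \<Rightarrow> ennreal" where
  "shift_energy u p h = (\<integral>\<^sup>+ w. ennreal (\<bar>u w - u (fst w + h, snd w)\<bar> powr p) \<partial>lborel)"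

lemma borel_measurable_shift_difference:
  fixes u :: "'a::euclidean_space \<times> 'b::euclidean_space \<Rightarrow> real"
  assumes um: "u \<in> borel_measurable borel"
  shows "(\<lambda>(h, w). ennreal (\<bar>u w - u (fst w + h, snd w)\<bar> powr p))
           \<in> borel_measurable (borel :: ('a \<times> ('a \<times> 'b)) measure)"
proof -
  have "(\<lambda>x::'a\<times>('a\<times>'b). u (fst (snd x) + fst x, snd (snd x))) \<in> borel_measurable borel"
       "(\<lambda>x::'a\<times>('a\<times>'b). u (snd x)) \<in> borel_measurable borel"
    by (rule measurable_compose[OF borel_measurable_continuous_onI um], intro continuous_intros)+
  then show ?thesis
    unfolding case_prod_beta
    by (intro measurable_compose[OF _ measurable_ennreal] powr_real_measurable borel_measurable_abs
        borel_measurable_diff borel_measurable_const)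
qed

lemma borel_measurable_shift_difference_at:
  fixes u :: "'a::euclidean_space \<times> 'b::euclidean_space \<Rightarrow> real"
  assumes um: "u \<in> borel_measurable borel"
  shows "(\<lambda>w. ennreal (\<bar>u w - u (fst w + h, snd w)\<bar> powr p)) \<in> borel_measurable borel"
  by (intro measurable_compose[OF _ measurable_ennreal] powr_real_measurable borel_measurable_abs
      borel_measurable_diff borel_measurable_const um measurable_compose[OF borel_measurable_continuous_onI um])
     (intro continuous_intros)

lemma borel_measurable_shift_energy:
  fixes u :: "'a::euclidean_space \<times> 'b::euclidean_space \<Rightarrow> real"
  assumes "u \<in> borel_measurable borel"
  shows "shift_energy u p \<in> borel_measurable borel"
proof -
  have "(\<lambda>h. \<integral>\<^sup>+ w. ennreal (\<bar>u w - u (fst w + h, snd w)\<bar> powr p) \<partial>lborel) \<in> borel_measurable lborel"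
    by (rule lborel.borel_measurable_nn_integral, rule borel_measurable_lborel_pair)
       (rule borel_measurable_shift_difference[OF assms])
  then show ?thesis unfolding shift_energy_def[abs_def] by simp
qed

lemma shift_energy_double:
  fixes u :: "'a::euclidean_space \<times> 'b::euclidean_space \<Rightarrow> real"
  assumes um: "u \<in> borel_measurable borel" and p: "1 \<le> p"
  shows "shift_energy u p (2 *\<^sub>R h) \<le> ennreal (2 powr p) * shift_energy u p h"
proof -
  define D where "D w = ennreal (\<bar>u w - u (fst w + h, snd w)\<bar> powr p)" for w
  have mD: "D \<in> borel_measurable borel"
    unfolding D_def[abs_def] by (rule borel_measurable_shift_difference_at[OF um])
  have mD': "(\<lambda>w. D ((h, 0) + w)) \<in> borel_measurable borel"
    by (rule measurable_compose[OF borel_measurable_continuous_onI mD]) (intro continuous_intros)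
  have pointwise: "ennreal (\<bar>u w - u (fst w + 2 *\<^sub>R h, snd w)\<bar> powr p)
      \<le> ennreal (2 powr (p - 1)) * (D w + D ((h, 0) + w))" for w
  proof -
    define a where "a = \<bar>u w - u (fst w + h, snd w)\<bar>"
    define b where "b = \<bar>u (fst w + h, snd w) - u (fst w + 2 *\<^sub>R h, snd w)\<bar>"
    have "\<bar>u w - u (fst w + 2 *\<^sub>R h, snd w)\<bar> powr p \<le> (a + b) powr p"
      unfolding a_def b_def using p by (intro powr_mono2) auto
    also have "\<dots> \<le> 2 powr (p - 1) * (a powr p + b powr p)"
      unfolding a_def b_def using p by (intro powr_add_le_two_powr) auto
    finally have *: "\<bar>u w - u (fst w + 2 *\<^sub>R h, snd w)\<bar> powr p \<le> 2 powr (p - 1) * (a powr p + b powr p)" .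
    have "(h, 0) + w = (fst w + h, snd w)" by (simp add: prod_eq_iff add.commute)
    then have "D ((h, 0) + w) = ennreal (b powr p)"
      unfolding D_def b_def by (simp add: scaleR_2 algebra_simps)
    then show ?thesis
      using * by (simp add: D_def a_def ennreal_mult'[symmetric] ennreal_plus[symmetric] del: ennreal_plus)
  qed
  have "shift_energy u p (2 *\<^sub>R h)
      \<le> (\<integral>\<^sup>+ w. ennreal (2 powr (p - 1)) * (D w + D ((h, 0) + w)) \<partial>lborel)"
    unfolding shift_energy_def by (intro nn_integral_mono pointwise)
  also have "\<dots> = ennreal (2 powr (p - 1)) * ((\<integral>\<^sup>+ w. D w \<partial>lborel) + (\<integral>\<^sup>+ w. D ((h, 0) + w) \<partial>lborel))"
    using mD mD' by (simp add: nn_integral_cmult nn_integral_add)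
  also have "(\<integral>\<^sup>+ w. D ((h, 0) + w) \<partial>lborel) = (\<integral>\<^sup>+ w. D w \<partial>lborel)"
    by (rule nn_integral_lborel_translate[symmetric, OF mD])
  also have "ennreal (2 powr (p - 1)) * ((\<integral>\<^sup>+ w. D w \<partial>lborel) + (\<integral>\<^sup>+ w. D w \<partial>lborel))
      = ennreal (2 powr (p - 1) * 2) * shift_energy u p h"
    by (simp add: shift_energy_def D_def ennreal_mult' mult.assoc mult_2[symmetric])
  also have "2 powr (p - 1) * 2 = (2 powr p :: real)"
    by (simp add: powr_diff)
  finally show ?thesis .
qed

definition radial_weight :: "real \<Rightarrow> 'a::real_normed_vector \<Rightarrow> ennreal" where
  "radial_weight e h = ennreal (1 / norm h powr e)"

lemma borel_measurable_radial_weight: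
  "radial_weight e \<in> borel_measurable (borel :: 'a::euclidean_space measure)"
  unfolding radial_weight_def[abs_def]
  by (intro measurable_compose[OF _ measurable_ennreal] borel_measurable_divide borel_measurable_const
      powr_real_measurable borel_measurable_norm)

lemma radial_weight_scaleR_2: "radial_weight e (2 *\<^sub>R h) = ennreal (2 powr (-e)) * radial_weight e h"
proof (cases "h = 0")
  case False
  have "norm (2 *\<^sub>R h) powr e = 2 powr e * norm h powr e" by (simp add: powr_mult)
  then show ?thesis unfolding radial_weight_def
    by (simp add: ennreal_mult'[symmetric] powr_minus divide_simps)
qed (simp add: radial_weight_def)

text \<open>No lower bound on \<open>norm h\<close> is needed: the junk value \<open>1 / 0 = 0\<close> makes every weight vanish at \<open>h = 0\<close>.\<close>

lemma radial_weight_le_powr: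
  assumes "norm h \<le> R" "e0 \<le> e1"
  shows "radial_weight e0 h \<le> ennreal (R powr (e1 - e0)) * radial_weight e1 h"
proof (cases "h = 0")
  case False
  then have h: "0 < norm h" by simp
  have "1 / norm h powr e0 = norm h powr (e1 - e0) * (1 / norm h powr e1)"
    using h by (simp add: powr_diff)
  also have "\<dots> \<le> R powr (e1 - e0) * (1 / norm h powr e1)"
    using assms h by (intro mult_right_mono powr_mono2) auto
  finally show ?thesis
    unfolding radial_weight_def by (simp add: ennreal_mult'[symmetric] ennreal_leI)
qed (simp add: radial_weight_def)

definition weighted_shift_energy ::
  "('a::euclidean_space \<times> 'b::euclidean_space \<Rightarrow> real) \<Rightarrow> real \<Rightarrow> real \<Rightarrow> 'a set \<Rightarrow> ennreal" where
  "weighted_shift_energy u p e S = (\<integral>\<^sup>+ h. indicator S h * shift_energy u p h * radial_weight e h \<partial>lborel)"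

lemma borel_measurable_weighted_shift_energy_integrand:
  fixes u :: "'a::euclidean_space \<times> 'b::euclidean_space \<Rightarrow> real"
  assumes "u \<in> borel_measurable borel" and "S \<in> sets borel"
  shows "(\<lambda>h. indicator S h * shift_energy u p h * radial_weight e h) \<in> borel_measurable borel"
  using assms
  by (intro borel_measurable_times_ennreal borel_measurable_indicator
      borel_measurable_shift_energy borel_measurable_radial_weight)

lemma weighted_shift_energy_mono:
  "S \<subseteq> T \<Longrightarrow> weighted_shift_energy u p e S \<le> weighted_shift_energy u p e T"
  unfolding weighted_shift_energy_def
  by (intro nn_integral_mono mult_right_mono) (auto simp: indicator_def)

lemma weighted_shift_energy_exponent_le:
  fixes u :: "'a::euclidean_space \<times> 'b::euclidean_space \<Rightarrow> real"
  assumes "u \<in> borel_measurable borel" "S \<in> sets borel" "S \<subseteq> cball 0 R" "e0 \<le> e1"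
  shows "weighted_shift_energy u p e0 S \<le> ennreal (R powr (e1 - e0)) * weighted_shift_energy u p e1 S"
proof -
  have "weighted_shift_energy u p e0 S
      \<le> (\<integral>\<^sup>+ h. ennreal (R powr (e1 - e0)) * (indicator S h * shift_energy u p h * radial_weight e1 h) \<partial>lborel)"
    unfolding weighted_shift_energy_def
  proof (intro nn_integral_mono)
    fix h
    show "indicator S h * shift_energy u p h * radial_weight e0 h
        \<le> ennreal (R powr (e1 - e0)) * (indicator S h * shift_energy u p h * radial_weight e1 h)"
    proof (cases "h \<in> S")
      case True
      then have "radial_weight e0 h \<le> ennreal (R powr (e1 - e0)) * radial_weight e1 h"
        using assms by (intro radial_weight_le_powr) auto
      then show ?thesis
        using True by (simp add: mult_left_mono mult.left_commute)
    qed simp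
  qed
  also have "\<dots> = ennreal (R powr (e1 - e0)) * weighted_shift_energy u p e1 S"
    unfolding weighted_shift_energy_def
    by (rule nn_integral_cmult, unfold measurable_lborel2)
       (rule borel_measurable_weighted_shift_energy_integrand[OF assms(1,2)])
  finally show ?thesis .
qed

lemma weighted_shift_energy_split_cball:
  fixes u :: "'a::euclidean_space \<times> 'b::euclidean_space \<Rightarrow> real"
  assumes "u \<in> borel_measurable borel" and "0 \<le> R"
  shows "weighted_shift_energy u p e (cball 0 R)
       = weighted_shift_energy u p e (cball 0 R - cball 0 (R/2)) + weighted_shift_energy u p e (cball 0 (R/2))"
proof -
  have "weighted_shift_energy u p e (cball 0 R)
      = (\<integral>\<^sup>+ h. indicator (cball 0 R - cball 0 (R/2)) h * shift_energy u p h * radial_weight e h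
              + indicator (cball 0 (R/2)) h * shift_energy u p h * radial_weight e h \<partial>lborel)"
    unfolding weighted_shift_energy_def
    by (intro nn_integral_cong) (use assms(2) in \<open>auto simp: indicator_def\<close>)
  also have "\<dots> = weighted_shift_energy u p e (cball 0 R - cball 0 (R/2)) + weighted_shift_energy u p e (cball 0 (R/2))"
    unfolding weighted_shift_energy_def
    by (intro nn_integral_add) (auto intro!: borel_measurable_weighted_shift_energy_integrand assms(1))
  finally show ?thesis .
qed

text \<open>Substituting \<open>h = 2h'\<close> costs \<open>2^n\<close>, the doubling of \<open>\<omega>\<close> costs \<open>2^p\<close>, the kernel gains \<open>2^{-n-tp}\<close>.\<close>

lemma weighted_shift_energy_cball_double:
  fixes u :: "'a::euclidean_space \<times> 'b::euclidean_space \<Rightarrow> real"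
  assumes um: "u \<in> borel_measurable borel" and p: "1 \<le> p"
  shows "weighted_shift_energy u p (real DIM('a) + t * p) (cball 0 R)
       \<le> ennreal (2 powr ((1 - t) * p)) * weighted_shift_energy u p (real DIM('a) + t * p) (cball 0 (R/2))"
proof -
  define e where "e = real DIM('a) + t * p"
  define f where "f h = indicator (cball 0 R) h * shift_energy u p h * radial_weight e h" for h
  define g where "g h = indicator (cball (0::'a) (R/2)) h * shift_energy u p h * radial_weight e h" for h
  have mf: "f \<in> borel_measurable borel" and mg: "g \<in> borel_measurable borel"
    unfolding f_def[abs_def] g_def[abs_def]
    by (auto intro!: borel_measurable_weighted_shift_energy_integrand um)
  have pointwise: "f (2 *\<^sub>R h) \<le> ennreal (2 powr p * 2 powr (-e)) * g h" for h
  proof -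
    have "indicator (cball 0 R) (2 *\<^sub>R h) = (indicator (cball (0::'a) (R/2)) h :: ennreal)"
      by (simp add: indicator_def)
    then have "f (2 *\<^sub>R h)
        = indicator (cball 0 (R/2)) h * shift_energy u p (2 *\<^sub>R h) * (ennreal (2 powr (-e)) * radial_weight e h)"
      unfolding f_def radial_weight_scaleR_2 by simp
    also have "\<dots> \<le> indicator (cball 0 (R/2)) h * (ennreal (2 powr p) * shift_energy u p h)
                   * (ennreal (2 powr (-e)) * radial_weight e h)"
      by (intro mult_right_mono mult_left_mono shift_energy_double um p) auto
    also have "\<dots> = ennreal (2 powr p * 2 powr (-e)) * g h"
      unfolding g_def by (simp add: ennreal_mult' mult_ac)
    finally show ?thesis .
  qed
  have "weighted_shift_energy u p e (cball 0 R) = (\<integral>\<^sup>+ h. f h \<partial>lborel)"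
    by (simp add: weighted_shift_energy_def f_def)
  also have "\<dots> = ennreal (\<bar>2\<bar> ^ DIM('a)) * (\<integral>\<^sup>+ h. f (2 *\<^sub>R h) \<partial>lborel)"
    by (rule nn_integral_lborel_scaleR[OF mf]) simp
  also have "\<dots> \<le> ennreal (\<bar>2\<bar> ^ DIM('a)) * (\<integral>\<^sup>+ h. ennreal (2 powr p * 2 powr (-e)) * g h \<partial>lborel)"
    by (intro mult_left_mono nn_integral_mono pointwise) auto
  also have "\<dots> = ennreal (\<bar>2\<bar> ^ DIM('a)) * ennreal (2 powr p * 2 powr (-e))
                   * weighted_shift_energy u p e (cball 0 (R/2))"
    unfolding weighted_shift_energy_def g_def[symmetric] by (simp add: nn_integral_cmult[OF mg[folded measurable_lborel2]] mult.assoc)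
  also have "ennreal (\<bar>2\<bar> ^ DIM('a)) * ennreal (2 powr p * 2 powr (-e)) = ennreal (2 powr ((1 - t) * p))"
  proof -
    have "\<bar>2\<bar> ^ DIM('a) * (2 powr p * 2 powr (-e)) = (2::real) powr (real DIM('a) + p + (-e))"
      by (simp add: powr_realpow[symmetric] powr_diff powr_add powr_minus field_simps)
    also have "real DIM('a) + p + (-e) = (1 - t) * p"
      by (simp add: e_def algebra_simps)
    finally show ?thesis by (simp add: ennreal_mult'[symmetric] del: ennreal_numeral)
  qed
  finally show ?thesis unfolding e_def .
qed

definition x_seminorm ::
  "('a::euclidean_space \<times> 'b::euclidean_space) set \<Rightarrow> real \<Rightarrow> real \<Rightarrow> ('a \<times> 'b \<Rightarrow> real) \<Rightarrow> ennreal" where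
  "x_seminorm \<Omega> r p u = (\<integral>\<^sup>+ w \<in> \<Omega>. (\<integral>\<^sup>+ z \<in> slice_y \<Omega> (snd w).
        ennreal (\<bar>u (fst w, snd w) - u (z, snd w)\<bar> powr p
                 / norm (fst w - z) powr (real DIM('a) + r * p)) \<partial>lborel) \<partial>lborel)"

definition y_seminorm ::
  "('a::euclidean_space \<times> 'b::euclidean_space) set \<Rightarrow> real \<Rightarrow> real \<Rightarrow> ('a \<times> 'b \<Rightarrow> real) \<Rightarrow> ennreal" where
  "y_seminorm \<Omega> r p u = (\<integral>\<^sup>+ w \<in> \<Omega>. (\<integral>\<^sup>+ v \<in> slice_x \<Omega> (fst w).
        ennreal (\<bar>u (fst w, snd w) - u (fst w, v)\<bar> powr p
                 / norm (snd w - v) powr (real DIM('b) + r * p)) \<partial>lborel) \<partial>lborel)"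

lemma aniso_seminorm_eq_x_plus_y: "aniso_seminorm \<Omega> r p u = x_seminorm \<Omega> r p u + y_seminorm \<Omega> r p u"
  unfolding aniso_seminorm_def x_seminorm_def y_seminorm_def ..

text \<open>Fubini after the substitution \<open>z = x + h\<close>, with the difference vectors \<open>h\<close> confined to \<open>S\<close>.\<close>

lemma nn_integral_x_difference_quotient:
  fixes u :: "'a::euclidean_space \<times> 'b::euclidean_space \<Rightarrow> real"
  assumes [measurable]: "u \<in> borel_measurable borel" "S \<in> sets borel"
  shows "(\<integral>\<^sup>+ w. (\<integral>\<^sup>+ z. indicator S (z - fst w) * ennreal (\<bar>u (fst w, snd w) - u (z, snd w)\<bar> powr p
                 / norm (fst w - z) powr e) \<partial>lborel) \<partial>lborel)
       = weighted_shift_energy u p e S"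
proof -
  define F where "F h w = indicator S h * radial_weight e h * ennreal (\<bar>u w - u (fst w + h, snd w)\<bar> powr p)"
    for h w
  have "(\<integral>\<^sup>+ z. indicator S (z - fst w) * ennreal (\<bar>u (fst w, snd w) - u (z, snd w)\<bar> powr p
                 / norm (fst w - z) powr e) \<partial>lborel) = (\<integral>\<^sup>+ h. F h w \<partial>lborel)" for w
  proof -
    have "(\<integral>\<^sup>+ z. indicator S (z - fst w) * ennreal (\<bar>u (fst w, snd w) - u (z, snd w)\<bar> powr p
                 / norm (fst w - z) powr e) \<partial>lborel)
       = (\<integral>\<^sup>+ h. indicator S (fst w + h - fst w) * ennreal (\<bar>u (fst w, snd w) - u (fst w + h, snd w)\<bar> powr p
                 / norm (fst w - (fst w + h)) powr e) \<partial>lborel)"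
      by (rule nn_integral_lborel_translate) measurable
    also have "\<dots> = (\<integral>\<^sup>+ h. F h w \<partial>lborel)"
      by (intro nn_integral_cong)
         (simp add: F_def radial_weight_def ennreal_mult'[symmetric] mult.commute mult.assoc norm_minus_commute)
    finally show ?thesis .
  qed
  then have "(\<integral>\<^sup>+ w. (\<integral>\<^sup>+ z. indicator S (z - fst w) * ennreal (\<bar>u (fst w, snd w) - u (z, snd w)\<bar> powr p
                 / norm (fst w - z) powr e) \<partial>lborel) \<partial>lborel)
      = (\<integral>\<^sup>+ w. (\<integral>\<^sup>+ h. F h w \<partial>lborel) \<partial>lborel)"
    by simp
  also have "\<dots> = (\<integral>\<^sup>+ h. (\<integral>\<^sup>+ w. F h w \<partial>lborel) \<partial>lborel)"
  proof (intro lborel_pair.Fubini' borel_measurable_lborel_pair)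
    have fst: "(fst :: 'a \<times> ('a \<times> 'b) \<Rightarrow> 'a) \<in> borel \<rightarrow>\<^sub>M borel"
      by (rule borel_measurable_continuous_onI) (intro continuous_intros)
    have ind: "(\<lambda>x::'a \<times> ('a \<times> 'b). indicator S (fst x) :: ennreal) \<in> borel_measurable borel"
      using measurable_compose[OF fst borel_measurable_indicator[OF assms(2)]] .
    have weight: "(\<lambda>x::'a \<times> ('a \<times> 'b). radial_weight e (fst x)) \<in> borel_measurable borel"
      using measurable_compose[OF fst borel_measurable_radial_weight] .
    show "case_prod F \<in> borel_measurable borel"
      unfolding F_def case_prod_beta
      by (intro borel_measurable_times_ennreal ind weight
          borel_measurable_shift_difference[OF assms(1), of p, unfolded case_prod_beta])
  qed
  also have "\<dots> = weighted_shift_energy u p e S"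
    unfolding weighted_shift_energy_def shift_energy_def F_def
    by (intro nn_integral_cong)
       (simp add: nn_integral_cmult borel_measurable_shift_difference_at[OF assms(1)], simp add: mult_ac)
  finally show ?thesis .
qed

lemma x_seminorm_le_weighted_shift_energy:
  fixes u :: "'a::euclidean_space \<times> 'b::euclidean_space \<Rightarrow> real"
  assumes um: "u \<in> borel_measurable borel"
    and slice_bound: "\<And>x z y. (x, y) \<in> \<Omega> \<Longrightarrow> (z, y) \<in> \<Omega> \<Longrightarrow> norm (x - z) \<le> d"
  shows "x_seminorm \<Omega> r p u \<le> weighted_shift_energy u p (real DIM('a) + r * p) (cball 0 d)"
proof -
  define F where "F w z = ennreal (\<bar>u (fst w, snd w) - u (z, snd w)\<bar> powr p
                                 / norm (fst w - z) powr (real DIM('a) + r * p))" for w z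
  have "x_seminorm \<Omega> r p u = (\<integral>\<^sup>+ w. (\<integral>\<^sup>+ z. F w z * indicator (slice_y \<Omega> (snd w)) z \<partial>lborel) * indicator \<Omega> w \<partial>lborel)"
    by (simp add: x_seminorm_def F_def)
  also have "\<dots> \<le> (\<integral>\<^sup>+ w. (\<integral>\<^sup>+ z. indicator (cball 0 d) (z - fst w) * F w z \<partial>lborel) \<partial>lborel)"
  proof (intro nn_integral_mono)
    fix w :: "'a \<times> 'b"
    have "F w z * indicator (slice_y \<Omega> (snd w)) z \<le> indicator (cball 0 d) (z - fst w) * F w z"
      if "w \<in> \<Omega>" for z
      using slice_bound[of "fst w" "snd w" z] that
      by (cases "z \<in> slice_y \<Omega> (snd w)") (auto simp: slice_y_def norm_minus_commute)
    then show "(\<integral>\<^sup>+ z. F w z * indicator (slice_y \<Omega> (snd w)) z \<partial>lborel) * indicator \<Omega> w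
        \<le> (\<integral>\<^sup>+ z. indicator (cball 0 d) (z - fst w) * F w z \<partial>lborel)"
      by (cases "w \<in> \<Omega>") (auto intro: nn_integral_mono)
  qed
  also have "\<dots> = weighted_shift_energy u p (real DIM('a) + r * p) (cball 0 d)"
    unfolding F_def by (rule nn_integral_x_difference_quotient[OF um]) simp
  finally show ?thesis .
qed

lemma x_seminorm_UNIV:
  fixes u :: "'a::euclidean_space \<times> 'b::euclidean_space \<Rightarrow> real"
  assumes "u \<in> borel_measurable borel"
  shows "x_seminorm UNIV r p u = weighted_shift_energy u p (real DIM('a) + r * p) UNIV"
  using nn_integral_x_difference_quotient[OF assms, of UNIV p "real DIM('a) + r * p"]
  by (simp add: x_seminorm_def slice_y_def)

definition dyadic_shell :: "real \<Rightarrow> nat \<Rightarrow> 'a::real_normed_vector set" where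
  "dyadic_shell d k = cball 0 (d / 2 ^ k) - cball 0 (d / 2 ^ Suc k)"

lemma dyadic_shell_exists:
  fixes h :: "'a::real_normed_vector"
  assumes "h \<noteq> 0" "norm h \<le> d"
  obtains k where "h \<in> dyadic_shell d k"
proof -
  obtain n where "d / norm h < 2 ^ n"
    using real_arch_pow[of 2 "d / norm h"] by auto
  then have ex: "\<exists>n. d / 2 ^ n < norm h"
    using assms by (intro exI[of _ n]) (simp add: field_simps)
  define m where "m = (LEAST n. d / (2::real) ^ n < norm h)"
  have m: "d / 2 ^ m < norm h"
    unfolding m_def by (rule LeastI_ex[OF ex])
  have "m \<noteq> 0"
    using m assms by (intro notI) simp
  then obtain k where k: "m = Suc k" by (cases m) auto
  have "\<not> d / 2 ^ k < norm h"
    using not_less_Least[of k "\<lambda>n. d / (2::real) ^ n < norm h"] k unfolding m_def by simp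
  then have "h \<in> dyadic_shell d k"
    using m k by (simp add: dyadic_shell_def)
  then show ?thesis ..
qed

lemma weighted_shift_energy_cball_le_suminf_shells:
  fixes u :: "'a::euclidean_space \<times> 'b::euclidean_space \<Rightarrow> real"
  assumes "u \<in> borel_measurable borel"
  shows "weighted_shift_energy u p e (cball 0 d) \<le> (\<Sum>k. weighted_shift_energy u p e (dyadic_shell d k))"
proof -
  define f where "f k h = indicator (dyadic_shell d k) h * shift_energy u p h * radial_weight e h" for k h
  have "indicator (cball 0 d) h * shift_energy u p h * radial_weight e h \<le> (\<Sum>k. f k h)" for h
  proof (cases "h \<noteq> 0 \<and> norm h \<le> d")
    case True
    then obtain k where "h \<in> dyadic_shell d k"
      using dyadic_shell_exists by blast
    then have "indicator (cball 0 d) h * shift_energy u p h * radial_weight e h \<le> f k h"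
      by (auto simp: f_def indicator_def)
    also have "\<dots> \<le> (\<Sum>k. f k h)"
      using sum_le_suminf[of "\<lambda>k. f k h" "{k}"] by simp
    finally show ?thesis .
  qed (auto simp: radial_weight_def)
  then have "weighted_shift_energy u p e (cball 0 d) \<le> (\<integral>\<^sup>+ h. (\<Sum>k. f k h) \<partial>lborel)"
    unfolding weighted_shift_energy_def by (intro nn_integral_mono)
  also have "\<dots> = (\<Sum>k. weighted_shift_energy u p e (dyadic_shell d k))"
    unfolding weighted_shift_energy_def f_def dyadic_shell_def
    by (intro nn_integral_suminf) (auto intro!: borel_measurable_weighted_shift_energy_integrand assms)
  finally show ?thesis .
qed

text \<open>Summation by parts: \<open>(Q - \<rho>) a\<^sub>k\<close> telescopes against \<open>(Q - 1) t\<^sub>k\<close> because \<open>a\<^sub>k \<le> (Q - 1) t\<^sub>k\<^sub>+\<^sub>1\<close>.\<close>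

lemma weighted_telescoping_bound:
  fixes a t :: "nat \<Rightarrow> real"
  assumes split: "\<And>k. t k = a k + t (Suc k)" and growth: "\<And>k. t k \<le> Q * t (Suc k)"
    and "0 \<le> \<rho>" "\<rho> \<le> 1"
  shows "(Q - \<rho>) * (\<Sum>k<N. \<rho>^k * a k) + (Q - 1) * \<rho>^N * t N \<le> (Q - 1) * t 0"
proof (induction N)
  case (Suc N)
  have step: "(Q - 1) * \<rho>^N * t N - ((Q - \<rho>) * (\<rho>^N * a N) + (Q - 1) * \<rho>^(Suc N) * t (Suc N))
      = \<rho>^N * (1 - \<rho>) * ((Q - 1) * t (Suc N) - a N)"
    by (subst split[of N]) (simp add: algebra_simps)
  have "0 \<le> (Q - 1) * t (Suc N) - a N"
    using split[of N] growth[of N] by (simp add: algebra_simps)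
  then have "0 \<le> \<rho>^N * (1 - \<rho>) * ((Q - 1) * t (Suc N) - a N)"
    using assms(3,4) by simp
  then show ?case
    using Suc step by (simp add: algebra_simps)
qed simp

lemma weighted_partial_sum_le:
  fixes a t :: "nat \<Rightarrow> real"
  assumes "\<And>k. t k = a k + t (Suc k)" and "\<And>k. t k \<le> Q * t (Suc k)" and "\<And>k. 0 \<le> t k"
    and "1 \<le> Q" "0 \<le> \<rho>" "\<rho> < 1"
  shows "(\<Sum>k<N. \<rho>^k * a k) \<le> (Q - 1) / (Q - \<rho>) * t 0"
proof -
  have "(Q - \<rho>) * (\<Sum>k<N. \<rho>^k * a k) + (Q - 1) * \<rho>^N * t N \<le> (Q - 1) * t 0"
    using assms(5,6) by (intro weighted_telescoping_bound assms(1,2)) auto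
  moreover have "0 \<le> (Q - 1) * \<rho>^N * t N"
    using assms(3-5) by simp
  ultimately show ?thesis
    using assms(4,6) by (simp add: field_simps)
qed

lemma ennreal_suminf_weighted_telescoping_le:
  fixes A T :: "nat \<Rightarrow> ennreal" and Q \<rho> :: real
  assumes split: "\<And>k. T k = A k + T (Suc k)" and growth: "\<And>k. T k \<le> ennreal Q * T (Suc k)"
    and finite: "T 0 \<noteq> top" and "1 \<le> Q" "0 \<le> \<rho>" "\<rho> < 1"
  shows "(\<Sum>k. ennreal (\<rho>^k) * A k) \<le> ennreal ((Q - 1) / (Q - \<rho>)) * T 0"
proof -
  have "T (Suc k) \<le> T k" for k
    using split[of k] by simp
  then have "decseq T"
    by (rule decseq_SucI)
  then have "T k \<le> T 0" for k
    by (rule decseqD) simp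
  then have T_finite: "T k \<noteq> top" for k
    using finite neq_top_trans by blast
  have A_finite: "A k \<noteq> top" for k
    using split[of k] T_finite[of k] by auto
  define t where "t k = enn2real (T k)" for k
  define a where "a k = enn2real (A k)" for k
  have T_eq: "T k = ennreal (t k)" and A_eq: "A k = ennreal (a k)" for k
    unfolding t_def a_def using T_finite A_finite by (simp_all add: ennreal_enn2real_if)
  have t0: "0 \<le> t k" and a0: "0 \<le> a k" for k
    by (simp_all add: t_def a_def)
  have t_split: "t k = a k + t (Suc k)" for k
    using split[of k] t0 a0 by (simp add: T_eq A_eq ennreal_plus[symmetric] del: ennreal_plus)
  have t_growth: "t k \<le> Q * t (Suc k)" for k
    using growth[of k] t0 assms(4) by (simp add: T_eq ennreal_mult'[symmetric])
  have partial: "(\<Sum>k<N. \<rho>^k * a k) \<le> (Q - 1) / (Q - \<rho>) * t 0" for N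
    using assms(4-6) by (intro weighted_partial_sum_le t_split t_growth t0)
  have "(\<Sum>k. ennreal (\<rho>^k) * A k) = (\<Sum>k. ennreal (\<rho>^k * a k))"
    using assms(5) a0 by (simp add: A_eq ennreal_mult)
  also have "\<dots> \<le> ennreal ((Q - 1) / (Q - \<rho>) * t 0)"
  proof (rule suminf_le_const)
    fix N
    have "(\<Sum>k<N. ennreal (\<rho>^k * a k)) = ennreal (\<Sum>k<N. \<rho>^k * a k)"
      using assms(5) a0 by (intro sum_ennreal) auto
    then show "(\<Sum>k<N. ennreal (\<rho>^k * a k)) \<le> ennreal ((Q - 1) / (Q - \<rho>) * t 0)"
      using partial by (simp add: ennreal_leI)
  qed (rule summableI)
  also have "\<dots> = ennreal ((Q - 1) / (Q - \<rho>)) * T 0"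
    unfolding T_eq using assms(4,6) t0 by (intro ennreal_mult) auto
  finally show ?thesis .
qed

lemma interpolation_constant_le:
  fixes p s s0 :: real
  assumes "0 < p" "s0 < s" "s < 1"
  shows "(1 - s0) * (2 powr ((1 - s) * p) - 1)
    \<le> (1 - s) * 2 powr ((1 - s0) * p) * (2 powr ((1 - s) * p) - 2 powr ((s0 - s) * p))"
proof -
  define X where "X = (1 - s) * p * ln 2"
  define Y where "Y = (1 - s0) * p * ln 2"
  have powr_eqs: "2 powr ((1 - s) * p) = exp X" "2 powr ((1 - s0) * p) = exp Y"
      "2 powr ((s0 - s) * p) = exp (X - Y)"
    by (simp_all add: powr_def X_def Y_def algebra_simps)
  have "exp X - 1 \<le> X * exp X"
    using exp_ge_add_one_self[of "-X"] mult_right_mono[of "1 - X" "exp (-X)" "exp X"]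
    by (simp add: exp_minus algebra_simps)
  then have "(1 - s0) * (exp X - 1) \<le> (1 - s0) * (X * exp X)"
    using assms by (intro mult_left_mono) auto
  also have "\<dots> = (1 - s) * exp X * Y"
    by (simp add: X_def Y_def algebra_simps)
  also have "\<dots> \<le> (1 - s) * exp X * (exp Y - 1)"
    using exp_ge_add_one_self[of Y] assms by (intro mult_left_mono) (auto simp: algebra_simps)
  also have "\<dots> = (1 - s) * exp Y * (exp X - exp (X - Y))"
    by (simp add: exp_diff algebra_simps)
  finally show ?thesis unfolding powr_eqs .
qed

lemma weighted_shift_energy_dyadic_shell_le:
  fixes u :: "'a::euclidean_space \<times> 'b::euclidean_space \<Rightarrow> real"
  assumes um: "u \<in> borel_measurable borel" and "e0 \<le> e1" and d: "0 < d"
  shows "weighted_shift_energy u p e0 (dyadic_shell d k)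
         \<le> ennreal (d powr (e1 - e0)) * (ennreal ((2 powr (e0 - e1)) ^ k)
              * weighted_shift_energy u p e1 (dyadic_shell d k))"
proof -
  have "(d / 2 ^ k) powr (e1 - e0) = d powr (e1 - e0) / ((2::real) ^ k) powr (e1 - e0)"
    using d by (simp add: powr_divide)
  also have "((2::real) ^ k) powr (e1 - e0) = 2 powr (real k * (e1 - e0))"
    by (simp add: powr_realpow[symmetric] powr_powr)
  also have "2 powr (real k * (e1 - e0)) = inverse ((2 powr (e0 - e1)) ^ k)"
    by (simp add: powr_power powr_minus[symmetric] algebra_simps)
  finally have scale: "(d / 2 ^ k) powr (e1 - e0) = d powr (e1 - e0) * (2 powr (e0 - e1)) ^ k"
    by (simp add: divide_inverse)
  have "weighted_shift_energy u p e0 (dyadic_shell d k)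
      \<le> ennreal ((d / 2 ^ k) powr (e1 - e0)) * weighted_shift_energy u p e1 (dyadic_shell d k)"
    using assms(2) by (intro weighted_shift_energy_exponent_le[OF um]) (auto simp: dyadic_shell_def)
  also have "\<dots> = ennreal (d powr (e1 - e0)) * (ennreal ((2 powr (e0 - e1)) ^ k)
                     * weighted_shift_energy u p e1 (dyadic_shell d k))"
    unfolding scale by (simp add: ennreal_mult mult.assoc)
  finally show ?thesis .
qed

lemma weighted_shift_energy_cball_exponent_le:
  fixes u :: "'a::euclidean_space \<times> 'b::euclidean_space \<Rightarrow> real"
  assumes um: "u \<in> borel_measurable borel" and p: "1 \<le> p" and s: "s0 < s" "s < 1" and d: "0 < d"
    and finite: "weighted_shift_energy u p (real DIM('a) + s * p) (cball 0 d) \<noteq> top"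
  defines "Q \<equiv> 2 powr ((1 - s) * p)" and "\<rho> \<equiv> 2 powr ((s0 - s) * p)"
  shows "weighted_shift_energy u p (real DIM('a) + s0 * p) (cball 0 d)
         \<le> ennreal (d powr ((s - s0) * p) * ((Q - 1) / (Q - \<rho>)))
            * weighted_shift_energy u p (real DIM('a) + s * p) (cball 0 d)"
proof -
  define e0 where "e0 = real DIM('a) + s0 * p"
  define e1 where "e1 = real DIM('a) + s * p"
  define T where "T k = weighted_shift_energy u p e1 (cball 0 (d / 2 ^ k))" for k
  define A where "A k = weighted_shift_energy u p e1 (dyadic_shell d k)" for k
  have Q: "1 \<le> Q" and \<rho>: "0 \<le> \<rho>" "\<rho> < 1"
    using p s by (auto simp: Q_def \<rho>_def mult_less_0_iff intro!: ge_one_powr_ge_zero powr_less_one)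
  have halve: "d / 2 ^ k / 2 = d / 2 ^ Suc k" for k
    by simp
  have split: "T k = A k + T (Suc k)" for k
    using weighted_shift_energy_split_cball[OF um, of "d / 2 ^ k" p e1] d
    unfolding T_def A_def dyadic_shell_def halve by simp
  have growth: "T k \<le> ennreal Q * T (Suc k)" for k
    using weighted_shift_energy_cball_double[OF um p, of s "d / 2 ^ k"]
    unfolding T_def Q_def e1_def halve .
  have exponents: "e1 - e0 = (s - s0) * p" "e0 - e1 = (s0 - s) * p"
    by (simp_all add: e0_def e1_def algebra_simps)
  have "weighted_shift_energy u p e0 (cball 0 d) \<le> (\<Sum>k. weighted_shift_energy u p e0 (dyadic_shell d k))"
    by (rule weighted_shift_energy_cball_le_suminf_shells[OF um])
  also have "\<dots> \<le> ennreal (d powr ((s - s0) * p)) * (\<Sum>k. ennreal (\<rho> ^ k) * A k)"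
  proof -
    have "e0 \<le> e1"
      using p s by (simp add: e0_def e1_def)
    from weighted_shift_energy_dyadic_shell_le[OF um this d]
    have "weighted_shift_energy u p e0 (dyadic_shell d k)
        \<le> ennreal (d powr ((s - s0) * p)) * (ennreal (\<rho> ^ k) * A k)" for k
      unfolding A_def \<rho>_def exponents .
    then show ?thesis
      unfolding ennreal_suminf_cmult[symmetric] by (intro suminf_le) auto
  qed
  also have "\<dots> \<le> ennreal (d powr ((s - s0) * p)) * (ennreal ((Q - 1) / (Q - \<rho>)) * T 0)"
    using finite Q \<rho>
    by (intro mult_left_mono ennreal_suminf_weighted_telescoping_le split growth) (auto simp: T_def e1_def)
  also have "\<dots> = ennreal (d powr ((s - s0) * p) * ((Q - 1) / (Q - \<rho>))) * T 0"
    unfolding ennreal_mult'[OF powr_ge_zero] by (simp only: mult.assoc)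
  finally show ?thesis
    by (simp add: T_def e0_def e1_def)
qed

lemma x_seminorm_interpolation:
  fixes u :: "'a::euclidean_space \<times> 'b::euclidean_space \<Rightarrow> real"
  assumes um: "u \<in> borel_measurable borel" and p: "1 \<le> p" and s: "s0 < s" "s < 1" and d: "0 < d"
    and slice_bound: "\<And>x z y. (x, y) \<in> \<Omega> \<Longrightarrow> (z, y) \<in> \<Omega> \<Longrightarrow> norm (x - z) \<le> d"
  shows "ennreal ((1 - s0) / (2 powr ((1 - s0) * p) * d powr ((s - s0) * p))) * x_seminorm \<Omega> s0 p u
         \<le> ennreal (1 - s) * x_seminorm UNIV s p u"
proof -
  define E where "E = weighted_shift_energy u p (real DIM('a) + s * p) (cball 0 d)"
  have E_le: "E \<le> x_seminorm UNIV s p u"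
    unfolding E_def x_seminorm_UNIV[OF um] by (rule weighted_shift_energy_mono) simp
  show ?thesis
  proof (cases "E = top")
    case True
    then show ?thesis
      using E_le s by (simp add: top_unique ennreal_mult_top)
  next
    case False
    define Q where "Q = (2::real) powr ((1 - s) * p)"
    define \<rho> where "\<rho> = (2::real) powr ((s0 - s) * p)"
    define K where "K = (2::real) powr ((1 - s0) * p)"
    define D where "D = d powr ((s - s0) * p)"
    define C where "C = (1 - s0) / (K * D)"
    define c where "c = (Q - 1) / (Q - \<rho>)"
    have Q: "1 \<le> Q" and \<rho>: "\<rho> < 1" and K: "0 < K" and D: "0 < D"
      using p s d by (auto simp: Q_def \<rho>_def K_def D_def mult_less_0_iff intro!: ge_one_powr_ge_zero powr_less_one)
    then have C: "0 \<le> C" and c: "0 \<le> c"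
      using s by (simp_all add: C_def c_def)
    have C_bound: "C * (D * c) \<le> 1 - s"
    proof -
      have "(1 - s0) * (Q - 1) \<le> (1 - s) * K * (Q - \<rho>)"
        unfolding Q_def K_def \<rho>_def using interpolation_constant_le[of p s0 s] p s by simp
      then have "(1 - s0) / K * c \<le> 1 - s"
        using K Q \<rho> by (simp add: c_def field_simps)
      moreover have "C * (D * c) = (1 - s0) / K * c"
        using D by (simp add: C_def)
      ultimately show ?thesis
        by simp
    qed
    have "x_seminorm \<Omega> s0 p u \<le> weighted_shift_energy u p (real DIM('a) + s0 * p) (cball 0 d)"
      by (rule x_seminorm_le_weighted_shift_energy[OF um slice_bound])
    also have "\<dots> \<le> ennreal (D * c) * E"
      unfolding D_def c_def Q_def \<rho>_def E_def
      by (rule weighted_shift_energy_cball_exponent_le[OF um p s d False[unfolded E_def]])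
    finally have "ennreal C * x_seminorm \<Omega> s0 p u \<le> ennreal C * (ennreal (D * c) * E)"
      by (rule mult_left_mono) simp
    also have "\<dots> = ennreal (C * (D * c)) * E"
      using C D c by (simp add: ennreal_mult mult.assoc)
    also have "\<dots> \<le> ennreal (1 - s) * x_seminorm UNIV s p u"
      using C_bound E_le by (intro mult_mono ennreal_leI) auto
    finally show ?thesis
      by (simp add: C_def K_def D_def)
  qed
qed

lemma y_seminorm_eq_x_seminorm_swap:
  fixes u :: "'a::euclidean_space \<times> 'b::euclidean_space \<Rightarrow> real"
  assumes um: "u \<in> borel_measurable borel" and \<Omega>: "\<Omega> \<in> sets borel"
  shows "y_seminorm \<Omega> r p u = x_seminorm {(y, x). (x, y) \<in> \<Omega>} r p (\<lambda>(y, x). u (x, y))"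
proof -
  define G where "G w v = ennreal (\<bar>u (fst w, snd w) - u (fst w, v)\<bar> powr p
      / norm (snd w - v) powr (real DIM('b) + r * p)) * indicator \<Omega> (fst w, v)" for w :: "'a \<times> 'b" and v
  define H where "H w = (\<integral>\<^sup>+ v. G w v \<partial>lborel) * indicator \<Omega> w" for w
  have "case_prod G \<in> borel_measurable (borel :: (('a \<times> 'b) \<times> 'b) measure)"
  proof -
    have "(\<lambda>x::('a \<times> 'b) \<times> 'b. u (fst (fst x), snd (fst x))) \<in> borel_measurable borel"
         "(\<lambda>x::('a \<times> 'b) \<times> 'b. u (fst (fst x), snd x)) \<in> borel_measurable borel"
      by (rule measurable_compose[OF borel_measurable_continuous_onI um], intro continuous_intros)+
    moreover have "(\<lambda>x::('a \<times> 'b) \<times> 'b. norm (snd (fst x) - snd x)) \<in> borel_measurable borel"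
      by (rule borel_measurable_continuous_onI) (intro continuous_intros)
    moreover have "(\<lambda>x::('a \<times> 'b) \<times> 'b. (fst (fst x), snd x)) \<in> borel \<rightarrow>\<^sub>M borel"
      by (rule borel_measurable_continuous_onI) (intro continuous_intros)
    then have "(\<lambda>x::('a \<times> 'b) \<times> 'b. indicator \<Omega> (fst (fst x), snd x) :: ennreal) \<in> borel_measurable borel"
      using measurable_compose[OF _ borel_measurable_indicator[OF \<Omega>]] by blast
    ultimately show ?thesis
      unfolding G_def case_prod_beta
      by (intro borel_measurable_times_ennreal measurable_compose[OF _ measurable_ennreal]
          borel_measurable_divide powr_real_measurable borel_measurable_abs borel_measurable_diff
          borel_measurable_const)
  qed
  then have "(\<lambda>w. \<integral>\<^sup>+ v. G w v \<partial>lborel) \<in> borel_measurable (lborel :: ('a \<times> 'b) measure)"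
    by (intro lborel.borel_measurable_nn_integral borel_measurable_lborel_pair)
  then have H: "H \<in> borel_measurable borel"
    unfolding H_def by (intro borel_measurable_times_ennreal borel_measurable_indicator \<Omega>) simp_all
  have "y_seminorm \<Omega> r p u = (\<integral>\<^sup>+ w. H w \<partial>lborel)"
    unfolding y_seminorm_def H_def G_def
    by (intro nn_integral_cong arg_cong2[where f="(*)"] refl) (auto simp: slice_x_def indicator_def)
  also have "\<dots> = (\<integral>\<^sup>+ w. H (snd w, fst w) \<partial>lborel)"
    by (rule nn_integral_lborel_swap[OF H])
  also have "\<dots> = x_seminorm {(y, x). (x, y) \<in> \<Omega>} r p (\<lambda>(y, x). u (x, y))"
    unfolding x_seminorm_def H_def G_def
    by (intro nn_integral_cong arg_cong2[where f="(*)"] refl) (auto simp: slice_y_def indicator_def)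
  finally show ?thesis .
qed

lemma y_seminorm_interpolation:
  fixes u :: "'a::euclidean_space \<times> 'b::euclidean_space \<Rightarrow> real"
  assumes um: "u \<in> borel_measurable borel" and \<Omega>: "\<Omega> \<in> sets borel"
    and p: "1 \<le> p" and s: "s0 < s" "s < 1" and d: "0 < d"
    and slice_bound: "\<And>x y v. (x, y) \<in> \<Omega> \<Longrightarrow> (x, v) \<in> \<Omega> \<Longrightarrow> norm (y - v) \<le> d"
  shows "ennreal ((1 - s0) / (2 powr ((1 - s0) * p) * d powr ((s - s0) * p))) * y_seminorm \<Omega> s0 p u
         \<le> ennreal (1 - s) * y_seminorm UNIV s p u"
proof -
  define u' where "u' = (\<lambda>(y, x). u (x, y))"
  have u': "u' \<in> borel_measurable borel"
    unfolding u'_def case_prod_beta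
    by (rule measurable_compose[OF borel_measurable_continuous_onI um]) (intro continuous_intros)
  have "y_seminorm UNIV s p u = x_seminorm UNIV s p u'"
    using y_seminorm_eq_x_seminorm_swap[OF um, of UNIV s p] unfolding u'_def by simp
  moreover have "y_seminorm \<Omega> s0 p u = x_seminorm {(y, x). (x, y) \<in> \<Omega>} s0 p u'"
    unfolding u'_def by (rule y_seminorm_eq_x_seminorm_swap[OF um \<Omega>])
  ultimately show ?thesis
    using x_seminorm_interpolation[OF u' p s d, of "{(y, x). (x, y) \<in> \<Omega>}"] slice_bound by auto
qed

theorem lemma4p5:
  fixes \<Omega> :: "('a::euclidean_space \<times> 'b::euclidean_space) set"
    and p s\<^sub>0 s :: real and u :: "'a \<times> 'b \<Rightarrow> real"
  assumes "bounded \<Omega>" and "open \<Omega>"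
    and "1 < p" and "0 < s\<^sub>0" and "s\<^sub>0 < s" and "s < 1"
    and "u \<in> tildeW s p \<Omega>"
  shows "ennreal ((1 - s\<^sub>0) / (2 powr ((1 - s\<^sub>0) * p) * diameter \<Omega> powr ((s - s\<^sub>0) * p)))
           * aniso_seminorm \<Omega> s\<^sub>0 p u
         \<le> ennreal (1 - s) * aniso_seminorm_full s p u"
proof (cases "diameter \<Omega> = 0")
  case True
  then show ?thesis using assms(3,5) by simp
next
  case False
  then have d: "0 < diameter \<Omega>"
    using diameter_ge_0[OF assms(1)] by linarith
  have um: "u \<in> borel_measurable borel"
    using assms(7) by (simp add: tildeW_def)
  have diam: "dist (x, y) (x', y') \<le> diameter \<Omega>" if "(x, y) \<in> \<Omega>" "(x', y') \<in> \<Omega>" for x y x' y'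
    using diameter_bounded_bound[OF assms(1) that] .
  have "norm (x - z) \<le> diameter \<Omega>" if "(x, y) \<in> \<Omega>" "(z, y) \<in> \<Omega>" for x z y
    using diam[OF that] by (simp add: dist_Pair_Pair dist_norm)
  moreover have "norm (y - v) \<le> diameter \<Omega>" if "(x, y) \<in> \<Omega>" "(x, v) \<in> \<Omega>" for x y v
    using diam[OF that] by (simp add: dist_Pair_Pair dist_norm)
  ultimately show ?thesis
    using x_seminorm_interpolation[OF um _ _ _ d] y_seminorm_interpolation[OF um _ _ _ _ d] assms(2-6)
    by (simp add: aniso_seminorm_full_def aniso_seminorm_eq_x_plus_y distrib_left add_mono)
qed

end
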